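(* Let $\mathfrak g$ be a $7$-dimensional real Lie algebra with nontrivial center, and let $\varphi\in\Lambda^3\mathfrak g^*$ define a calibrated $\mathrm{G}_2$-structure on $\mathfrak g$. Let $\pi\colon\mathfrak g\to\mathfrak h$ be a Lie algebra epimorphism onto a $6$-dimensional Lie algebra $\mathfrak h$ whose kernel is contained in the center of $\mathfrak g$; let $\xi$ span $\ker\pi$ and let $\eta=\xi^\flat\in\mathfrak g^*$ be the metric dual of $\xi$ with respect to the inner product determined by $\varphi$. Write $\varphi=\pi^*\omega\wedge\eta+\pi^*\psi^+$ with $\omega\in\Lambda^2\mathfrak h^*$, $\psi^+\in\Lambda^3\mathfrak h^*$, and write $d\eta=\pi^*\gamma$ with $\gamma\in\Lambda^2\mathfrak h^*$ (possible since $\xi$ is central; $\gamma$ is closed and is called the curvature form). Then $\omega$ is a symplectic form on $\mathfrak h$ (closed and nondegenerate), and the class $[\gamma]\in H^2(\mathfrak h^* )$ lies in the kernel of the map $H^2(\mathfrak h^* )\to H^4(\mathfrak h^* )$, $[\beta]\mapsto[\beta\wedge\omega]$. Moreover, if $\gamma$ is exact on $\mathfrak h$, then $\mathfrak g\cong\mathfrak h\oplus\mathbb R$ as Lie algebras.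
   Context: For a real Lie algebra $\mathfrak g$, $d$ denotes the Chevalley–Eilenberg differential on $\Lambda^\bullet\mathfrak g^*$ (on $1$-forms $d\alpha(X,Y)=-\alpha([X,Y])$, extended as a graded derivation), and $H^k(\mathfrak g^* )$ the corresponding cohomology. A $3$-form $\varphi\in\Lambda^3\mathfrak g^*$ on a $7$-dimensional Lie algebra defines a $\mathrm{G}_2$-structure if there is a basis $f^1,\dots,f^7$ of $\mathfrak g^*$ with $\varphi=f^{127}+f^{347}+f^{567}+f^{135}-f^{236}-f^{146}-f^{245}$ (where $f^{ijk}=f^i\wedge f^j\wedge f^k$); $\varphi$ determines the inner product for which such a coframe is orthonormal. The $\mathrm{G}_2$-structure is calibrated if $d\varphi=0$. *)

theory Defs
  imports "HOL-Analysis.Analysis" "HOL-Combinatorics.Permutations"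
begin

definition lie_algebra :: "('v::real_vector \<Rightarrow> 'v \<Rightarrow> 'v) \<Rightarrow> bool" where
  "lie_algebra br \<longleftrightarrow> bilinear br \<and> (\<forall>x. br x x = 0) \<and>
     (\<forall>x y z. br x (br y z) + br y (br z x) + br z (br x y) = 0)"

text \<open>k-forms on V are modelled as functions of a sequence of vectors that only depend on the
first k entries, are linear in each of them and alternating.\<close>
definition alt_form :: "nat \<Rightarrow> ((nat \<Rightarrow> 'v::real_vector) \<Rightarrow> real) \<Rightarrow> bool" where
  "alt_form k \<alpha> \<longleftrightarrow>
     (\<forall>x y. (\<forall>i<k. x i = y i) \<longrightarrow> \<alpha> x = \<alpha> y) \<and>
     (\<forall>i<k. \<forall>x. linear (\<lambda>v. \<alpha> (x(i := v)))) \<and>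
     (\<forall>x i j. i < k \<and> j < k \<and> i \<noteq> j \<and> x i = x j \<longrightarrow> \<alpha> x = 0)"

definition one_form :: "('v \<Rightarrow> real) \<Rightarrow> (nat \<Rightarrow> 'v) \<Rightarrow> real" where
  "one_form f = (\<lambda>x. f (x 0))"

text \<open>Wedge product (determinant convention: f^1 \<and> f^2 (x,y) = f^1(x) f^2(y) - f^1(y) f^2(x)).\<close>
definition wedge :: "nat \<Rightarrow> nat \<Rightarrow> ((nat \<Rightarrow> 'v) \<Rightarrow> real) \<Rightarrow> ((nat \<Rightarrow> 'v) \<Rightarrow> real)
    \<Rightarrow> (nat \<Rightarrow> 'v) \<Rightarrow> real" where
  "wedge k l \<alpha> \<beta> = (\<lambda>x. (\<Sum>\<sigma>\<in>{\<sigma>. \<sigma> permutes {..<k+l}}.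
      of_int (sign \<sigma>) * \<alpha> (x \<circ> \<sigma>) * \<beta> (\<lambda>i. x (\<sigma> (i + k)))) / (fact k * fact l))"

text \<open>Index of the m-th element of {0..} minus {i,j} (for i < j).\<close>
definition skip2 :: "nat \<Rightarrow> nat \<Rightarrow> nat \<Rightarrow> nat" where
  "skip2 i j m = (if m < i then m else if m + 1 < j then m + 1 else m + 2)"

definition ce_d :: "('v \<Rightarrow> 'v \<Rightarrow> 'v) \<Rightarrow> nat \<Rightarrow> ((nat \<Rightarrow> 'v) \<Rightarrow> real) \<Rightarrow> (nat \<Rightarrow> 'v) \<Rightarrow> real" where
  "ce_d br k \<alpha> = (\<lambda>x. \<Sum>i\<in>{..k}. \<Sum>j\<in>{i<..k}.
      (-1) ^ (i + j) * \<alpha> (\<lambda>m. if m = 0 then br (x i) (x j) else x (skip2 i j (m - 1))))"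

definition pullback :: "('v \<Rightarrow> 'w) \<Rightarrow> ((nat \<Rightarrow> 'w) \<Rightarrow> real) \<Rightarrow> (nat \<Rightarrow> 'v) \<Rightarrow> real" where
  "pullback \<pi> \<alpha> = (\<lambda>x. \<alpha> (\<pi> \<circ> x))"

definition f3 :: "(nat \<Rightarrow> 'v \<Rightarrow> real) \<Rightarrow> nat \<Rightarrow> nat \<Rightarrow> nat \<Rightarrow> (nat \<Rightarrow> 'v) \<Rightarrow> real" where
  "f3 f a b c = wedge 2 1 (wedge 1 1 (one_form (f a)) (one_form (f b))) (one_form (f c))"

definition phi_std :: "(nat \<Rightarrow> 'v \<Rightarrow> real) \<Rightarrow> (nat \<Rightarrow> 'v) \<Rightarrow> real" where
  "phi_std f = (\<lambda>x. f3 f 1 2 7 x + f3 f 3 4 7 x + f3 f 5 6 7 x + f3 f 1 3 5 x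
      - f3 f 2 3 6 x - f3 f 1 4 6 x - f3 f 2 4 5 x)"

text \<open>f^1..f^7 is a basis of the dual space (7 linearly independent linear functionals,
the space being 7-dimensional).\<close>
definition coframe7 :: "(nat \<Rightarrow> 'v::real_vector \<Rightarrow> real) \<Rightarrow> bool" where
  "coframe7 f \<longleftrightarrow> (\<forall>i\<in>{1..7}. linear (f i)) \<and>
     (\<forall>c::nat \<Rightarrow> real. (\<forall>v. (\<Sum>i=1..7. c i * f i v) = 0) \<longrightarrow> (\<forall>i\<in>{1..7}. c i = 0))"

definition G2_coframe :: "((nat \<Rightarrow> 'v::real_vector) \<Rightarrow> real) \<Rightarrow> (nat \<Rightarrow> 'v \<Rightarrow> real) \<Rightarrow> bool" where
  "G2_coframe \<phi> f \<longleftrightarrow> coframe7 f \<and> \<phi> = phi_std f"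

definition coframe_inner :: "(nat \<Rightarrow> 'v \<Rightarrow> real) \<Rightarrow> 'v \<Rightarrow> 'v \<Rightarrow> real" where
  "coframe_inner f u v = (\<Sum>i=1..7. f i u * f i v)"

definition sum_R_bracket :: "('h \<Rightarrow> 'h \<Rightarrow> 'h) \<Rightarrow> 'h \<times> real \<Rightarrow> 'h \<times> real \<Rightarrow> 'h \<times> real" where
  "sum_R_bracket br p q = (br (fst p) (fst q), 0)"

end

theory Submission
  imports Defs
begin

(*
  Take the connection functional theta = <xi, -> of the G2 metric, so that eta = theta and
  theta(xi) = |xi|^2 > 0, and split vectors of g into horizontal lifts (theta = 0) plus
  multiples of the central vector xi.  All claims come from evaluating d(phi) = 0 on suitable
  quadruples:
  - on (x0, x1, x2, xi): since xi is central, d(phi) = |xi|^2 d(omega)(pi x0, pi x1, pi x2),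
    so omega is closed;
  - on four horizontal lifts: d(phi) = gamma ^ omega + d(psi), so gamma ^ omega = d(-psi);
  - phi(x, v, xi) = |xi|^2 omega(pi x, pi v), and phi(x, -, xi) = 0 forces x to be parallel
    to xi (a Lagrange identity for the 7-dimensional cross product), so omega is
    nondegenerate;
  - if gamma = d(beta), then theta - pi^* beta kills all brackets and, together with pi,
    gives a Lie algebra isomorphism g -> h (+) R.
*)

definition tup1 :: "'v \<Rightarrow> nat \<Rightarrow> 'v" where "tup1 a = (\<lambda>i. a)"
definition tup2 :: "'v \<Rightarrow> 'v \<Rightarrow> nat \<Rightarrow> 'v" where "tup2 a b = (\<lambda>i. if i = 0 then a else b)"
definition tup3 :: "'v \<Rightarrow> 'v \<Rightarrow> 'v \<Rightarrow> nat \<Rightarrow> 'v" where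
  "tup3 a b c = (\<lambda>i. if i = 0 then a else if i = 1 then b else c)"
definition tup4 :: "'v \<Rightarrow> 'v \<Rightarrow> 'v \<Rightarrow> 'v \<Rightarrow> nat \<Rightarrow> 'v" where
  "tup4 a b c d = (\<lambda>i. if i = 0 then a else if i = 1 then b else if i = 2 then c else d)"

lemma tup_simps:
  "tup1 a i = a"
  "tup2 a b 0 = a" "tup2 a b (Suc 0) = b" "tup2 a b 1 = b"
  "tup3 a b c 0 = a" "tup3 a b c (Suc 0) = b" "tup3 a b c 1 = b" "tup3 a b c 2 = c"
  "tup4 a b c d 0 = a" "tup4 a b c d (Suc 0) = b" "tup4 a b c d 1 = b" "tup4 a b c d 2 = c"
  "tup4 a b c d 3 = d"
  by (simp_all add: tup1_def tup2_def tup3_def tup4_def)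

lemma alt_dep: "alt_form k \<alpha> \<Longrightarrow> (\<And>i. i < k \<Longrightarrow> x i = y i) \<Longrightarrow> \<alpha> x = \<alpha> y"
  unfolding alt_form_def by blast

lemma alt_zero: assumes "alt_form k \<alpha>" "i < k" "x i = 0" shows "\<alpha> x = 0"
proof -
  have "linear (\<lambda>v. \<alpha> (x(i := v)))" using assms unfolding alt_form_def by blast
  then have "\<alpha> (x(i := 0)) = 0" using linear_0 by fastforce
  moreover have "x(i := 0) = x" using assms(3) by auto
  ultimately show ?thesis by simp
qed

lemma alt2_norm: "alt_form 2 \<alpha> \<Longrightarrow> \<alpha> y = \<alpha> (tup2 (y 0) (y 1))"
  by (erule alt_dep) (auto simp add: tup2_def less_2_cases_iff)

lemma alt2_zero: assumes "alt_form 2 \<alpha>" shows "\<alpha> (tup2 0 b) = 0" "\<alpha> (tup2 a 0) = 0"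
  by (rule alt_zero[OF assms, of 0], simp_all add: tup_simps)
     (rule alt_zero[OF assms, of 1], simp_all add: tup_simps)

lemma alt3_zero:
  assumes "alt_form 3 \<alpha>" shows "\<alpha> (tup3 0 b c) = 0" "\<alpha> (tup3 a 0 c) = 0" "\<alpha> (tup3 a b 0) = 0"
  by (rule alt_zero[OF assms, of 0], simp_all add: tup_simps)
     (rule alt_zero[OF assms, of 1], simp_all add: tup_simps,
      rule alt_zero[OF assms, of 2], simp_all add: tup_simps)

lemma alt_form_neg: "alt_form k \<alpha> \<Longrightarrow> alt_form k (\<lambda>x. - \<alpha> x)"
  unfolding alt_form_def by (auto intro: linear_compose_neg)

lemma alt1_linear: assumes "alt_form 1 \<beta>" shows "linear (\<lambda>w. \<beta> (tup1 w))"
proof -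
  have "linear (\<lambda>v. \<beta> ((\<lambda>i. 0)(0 := v)))" using assms unfolding alt_form_def by blast
  moreover have "\<beta> ((\<lambda>i. 0)(0 := v)) = \<beta> (tup1 v)" for v
    by (rule alt_dep[OF assms]) (simp add: tup1_def)
  ultimately show ?thesis by simp
qed

(* A 2-form is antisymmetric: expand alpha(b + c, b + c) = 0 bilinearly. *)
lemma alt2_swap: assumes a: "alt_form 2 \<alpha>" shows "\<alpha> (tup2 b c) = - \<alpha> (tup2 c b)"
proof -
  define L where "L u v = \<alpha> (tup2 u v)" for u v
  have left: "linear (\<lambda>u. L u w)" for w
  proof -
    have "linear (\<lambda>v. \<alpha> ((tup2 0 w)(0 := v)))" using a unfolding alt_form_def by auto
    moreover have "(tup2 0 w)(0 := v) = tup2 v w" for v by (auto simp: tup2_def)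
    ultimately show ?thesis unfolding L_def by simp
  qed
  have right: "linear (\<lambda>v. L u v)" for u
  proof -
    have "linear (\<lambda>v. \<alpha> ((tup2 u 0)(1 := v)))" using a unfolding alt_form_def by auto
    moreover have "\<alpha> ((tup2 u 0)(1 := v)) = \<alpha> (tup2 u v)" for v
      by (rule alt_dep[OF a]) (auto simp: tup2_def less_2_cases_iff)
    ultimately show ?thesis unfolding L_def by simp
  qed
  have diag: "L u u = 0" for u
  proof -
    have "\<forall>x i j. i < 2 \<and> j < 2 \<and> i \<noteq> j \<and> x i = x j \<longrightarrow> \<alpha> x = 0"
      using a unfolding alt_form_def by blast
    from this[rule_format, of 0 1 "tup2 u u"] show ?thesis unfolding L_def by (simp add: tup_simps)
  qed
  have "L (b + c) (b + c) = L b b + L b c + (L c b + L c c)"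
    using linear_add[OF left] linear_add[OF right] by simp
  then have "L b c + L c b = 0" using diag[of b] diag[of c] diag[of "b + c"] by simp
  then show ?thesis unfolding L_def by linarith
qed

lemma pullback2:
  assumes "alt_form 2 \<alpha>" shows "pullback \<pi> \<alpha> y = \<alpha> (tup2 (\<pi> (y 0)) (\<pi> (y 1)))"
  unfolding pullback_def by (rule alt_dep[OF assms]) (auto simp: tup2_def less_2_cases_iff)

lemma pullback3:
  assumes "alt_form 3 \<alpha>" shows "pullback \<pi> \<alpha> y = \<alpha> (tup3 (\<pi> (y 0)) (\<pi> (y 1)) (\<pi> (y 2)))"
  unfolding pullback_def
  by (rule alt_dep[OF assms]) (auto simp: tup3_def numeral_3_eq_3 numeral_2_eq_2 less_Suc_eq)

abbreviation tr :: "nat \<Rightarrow> nat \<Rightarrow> nat \<Rightarrow> nat" where "tr \<equiv> Transposition.transpose"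

lemma sign_tr_comp: "permutation p \<Longrightarrow> sign (tr a b \<circ> p) = (if a = b then 1 else -1) * sign p"
  by (simp add: sign_compose permutation_swap_id sign_swap_id)
lemma sign_tr: "sign (tr a b) = (if a = b then 1 else -1)"
  by (simp add: sign_swap_id)
lemma permutation_tr_comp: "permutation p \<Longrightarrow> permutation (tr a b \<circ> p)"
  by (simp add: permutation_compose permutation_swap_id)
lemmas sign_simps = sign_tr_comp sign_tr permutation_tr_comp permutation_swap_id

lemma signed_sum_perm2:
  "(\<Sum>\<sigma>\<in>{p. p permutes {0,1::nat}}. of_int (sign \<sigma>) * (g (\<sigma> 0) (\<sigma> 1)::real)) = g 0 1 - g 1 0"
proof -
  have expand: "sum F {p. p permutes {0,1::nat}} = F id + F (tr 0 1)" for F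
    by (simp add: sum_over_permutations_insert)
  show ?thesis unfolding expand by (simp add: sign_simps)
qed

lemma signed_sum_perm3:
  "(\<Sum>\<sigma>\<in>{p. p permutes {0,1,2::nat}}. of_int (sign \<sigma>) * (g (\<sigma> 0) (\<sigma> 1) (\<sigma> 2)::real)) =
   g 0 1 2 - g 0 2 1 - g 1 0 2 + g 1 2 0 + g 2 0 1 - g 2 1 0"
proof -
  have expand: "sum F {p. p permutes {0,1,2::nat}} = F id + F (tr 1 2) + F (tr 0 1) + F (tr 0 1 \<circ> tr 1 2)
     + F (tr 0 2) + F (tr 0 2 \<circ> tr 1 2)" for F
    by (simp add: sum_over_permutations_insert add.assoc)
  show ?thesis unfolding expand by (simp add: sign_simps del: One_nat_def)
qed

lemma signed_sum_perm4:
  "(\<Sum>\<sigma>\<in>{p. p permutes {0,1,2,3::nat}}. of_int (sign \<sigma>) * (g (\<sigma> 0) (\<sigma> 1) (\<sigma> 2) (\<sigma> 3)::real)) =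
  g 0 1 2 3 - g 0 1 3 2 - g 0 2 1 3 + g 0 2 3 1 + g 0 3 1 2 - g 0 3 2 1 - g 1 0 2 3 + g 1 0 3 2
  + g 1 2 0 3 - g 1 2 3 0 - g 1 3 0 2 + g 1 3 2 0 + g 2 0 1 3 - g 2 0 3 1 - g 2 1 0 3 + g 2 1 3 0
  + g 2 3 0 1 - g 2 3 1 0 - g 3 0 1 2 + g 3 0 2 1 + g 3 1 0 2 - g 3 1 2 0 - g 3 2 0 1 + g 3 2 1 0"
proof -
  have expand: "sum F {p. p permutes {0,1,2,3::nat}} =
     (\<Sum>b\<in>{0,1,2,3}. \<Sum>c\<in>{1,2,3}. \<Sum>d\<in>{2,3}. F (tr 0 b \<circ> (tr 1 c \<circ> tr 2 d)))" for F
    by (simp add: sum_over_permutations_insert)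
  show ?thesis
    unfolding expand
    apply (simp only: sum.insert finite.intros insert_iff empty_iff simp_thms zero_neq_one
        one_neq_zero sum.empty numeral_eq_iff semiring_norm)
    by (simp add: sign_simps del: One_nat_def)
qed

lemma wedge11: "wedge 1 1 (one_form a) (one_form b) x = a (x 0) * b (x 1) - a (x 1) * b (x 0)"
proof -
  have e: "{..<1+1::nat} = {0,1}" by auto
  define g where "g i j = a (x i) * b (x j)" for i j
  have "wedge 1 1 (one_form a) (one_form b) x
      = (\<Sum>\<sigma>\<in>{p. p permutes {0,1::nat}}. of_int (sign \<sigma>) * g (\<sigma> 0) (\<sigma> 1))"
    unfolding wedge_def e by (simp add: g_def one_form_def mult.assoc)
  also have "\<dots> = a (x 0) * b (x 1) - a (x 1) * b (x 0)"
    unfolding signed_sum_perm2 unfolding g_def by simp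
  finally show ?thesis .
qed

lemma wedge21:
  assumes A: "\<And>x. A x = A (tup2 (x 0) (x 1))" and As: "\<And>a b. A (tup2 b a) = - A (tup2 a b)"
    and B: "\<And>x. B x = B (tup1 (x 0))"
  shows "wedge 2 1 A B x = A (tup2 (x 0) (x 1)) * B (tup1 (x 2))
     - A (tup2 (x 0) (x 2)) * B (tup1 (x 1)) + A (tup2 (x 1) (x 2)) * B (tup1 (x 0))"
    (is "_ = ?R")
proof -
  have e: "{..<2+1::nat} = {0,1,2}" by auto
  have A': "A (x \<circ> \<sigma>) = A (tup2 (x (\<sigma> 0)) (x (\<sigma> 1)))" for \<sigma> by (subst A) simp
  have B': "B (\<lambda>i. x (\<sigma> (i+2))) = B (tup1 (x (\<sigma> 2)))" for \<sigma>
    using B[of "\<lambda>i. x (\<sigma> (i+2))"] by (simp add: numeral_2_eq_2)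
  define g where "g i j k = A (tup2 (x i) (x j)) * B (tup1 (x k))" for i j k
  have sA: "A (tup2 (x j) (x i)) = - A (tup2 (x i) (x j))" for i j by (rule As)
  have "wedge 2 1 A B x
      = (\<Sum>\<sigma>\<in>{p. p permutes {0,1,2::nat}}. of_int (sign \<sigma>) * g (\<sigma> 0) (\<sigma> 1) (\<sigma> 2)) / 2"
    unfolding wedge_def e
    by (intro arg_cong2[where f="(/)"] sum.cong refl) (simp_all only: g_def A' B' mult.assoc, simp)
  also have "\<dots> = ?R"
    unfolding signed_sum_perm3 unfolding g_def
    by (simp only: sA[of 1 0] sA[of 2 0] sA[of 2 1] mult_minus_left) (simp add: field_simps)
  finally show ?thesis .
qed

lemma wedge22:
  assumes A: "\<And>x. A x = A (tup2 (x 0) (x 1))" and As: "\<And>a b. A (tup2 b a) = - A (tup2 a b)"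
    and B: "\<And>x. B x = B (tup2 (x 0) (x 1))" and Bs: "\<And>a b. B (tup2 b a) = - B (tup2 a b)"
  shows "wedge 2 2 A B x = A (tup2 (x 0) (x 1)) * B (tup2 (x 2) (x 3))
     - A (tup2 (x 0) (x 2)) * B (tup2 (x 1) (x 3)) + A (tup2 (x 0) (x 3)) * B (tup2 (x 1) (x 2))
     + A (tup2 (x 1) (x 2)) * B (tup2 (x 0) (x 3)) - A (tup2 (x 1) (x 3)) * B (tup2 (x 0) (x 2))
     + A (tup2 (x 2) (x 3)) * B (tup2 (x 0) (x 1))" (is "_ = ?R")
proof -
  have e: "{..<2+2::nat} = {0,1,2,3}" by auto
  have A': "A (x \<circ> \<sigma>) = A (tup2 (x (\<sigma> 0)) (x (\<sigma> 1)))" for \<sigma> by (subst A) simp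
  have B': "B (\<lambda>i. x (\<sigma> (i+2))) = B (tup2 (x (\<sigma> 2)) (x (\<sigma> 3)))" for \<sigma>
    using B[of "\<lambda>i. x (\<sigma> (i+2))"] by (simp add: numeral_2_eq_2 numeral_3_eq_3)
  define g where "g i j k l = A (tup2 (x i) (x j)) * B (tup2 (x k) (x l))" for i j k l
  have sA: "A (tup2 (x j) (x i)) = - A (tup2 (x i) (x j))" for i j by (rule As)
  have sB: "B (tup2 (x j) (x i)) = - B (tup2 (x i) (x j))" for i j by (rule Bs)
  have "wedge 2 2 A B x = (\<Sum>\<sigma>\<in>{p. p permutes {0,1,2,3::nat}}.
      of_int (sign \<sigma>) * g (\<sigma> 0) (\<sigma> 1) (\<sigma> 2) (\<sigma> 3)) / 4"
    unfolding wedge_def e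
    by (intro arg_cong2[where f="(/)"] sum.cong refl) (simp_all only: g_def A' B' mult.assoc, simp)
  also have "\<dots> = ?R"
    unfolding signed_sum_perm4 unfolding g_def
    apply (simp only: sA[of 1 0] sA[of 2 0] sA[of 3 0] sA[of 2 1] sA[of 3 1] sA[of 3 2]
        sB[of 1 0] sB[of 2 0] sB[of 3 0] sB[of 2 1] sB[of 3 1] sB[of 3 2]
        mult_minus_left mult_minus_right)
    by (simp add: field_simps)
  finally show ?thesis .
qed

lemma small_nat_intervals:
  "{..3::nat} = {0,1,2,3}" "{..2::nat} = {0,1,2}" "{..1::nat} = {0,1}"
  "{0<..3::nat} = {1,2,3}" "{1<..3::nat} = {2,3}" "{2<..3::nat} = {3}" "{3<..3::nat} = {}"
  "{0<..2::nat} = {1,2}" "{1<..2::nat} = {2}" "{2<..2::nat} = {}" "{0<..1::nat} = {1}"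
  "{1<..1::nat} = {}"
  by auto

lemma sum_atMost_expand:
  "sum h {..3::nat} = h 0 + h 1 + h 2 + h 3" "sum h {..2::nat} = h 0 + h 1 + h 2"
  "sum h {..1::nat} = h 0 + h 1"
  "sum h {0<..3::nat} = h 1 + h 2 + h 3" "sum h {1<..3::nat} = h 2 + h 3" "sum h {2<..3::nat} = h 3"
  "sum h {3<..3::nat} = 0"
  "sum h {0<..2::nat} = h 1 + h 2" "sum h {1<..2::nat} = h 2" "sum h {2<..2::nat} = 0"
  "sum h {0<..1::nat} = h 1" "sum h {1<..1::nat} = 0"
  by (simp_all only: small_nat_intervals) (simp_all add: add.assoc)

lemma alt1_arg: "alt_form 1 \<alpha> \<Longrightarrow> \<alpha> (\<lambda>m. if m = 0 then a else F m) = \<alpha> (tup1 a)"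
  by (erule alt_dep) (simp add: tup1_def)
lemma alt2_arg: "alt_form 2 \<alpha> \<Longrightarrow> \<alpha> (\<lambda>m. if m = 0 then a else F m) = \<alpha> (tup2 a (F 1))"
  by (erule alt_dep) (auto simp add: tup2_def less_2_cases_iff)
lemma alt3_arg:
  "alt_form 3 \<alpha> \<Longrightarrow> \<alpha> (\<lambda>m. if m = 0 then a else F m) = \<alpha> (tup3 a (F 1) (F 2))"
  by (erule alt_dep) (auto simp add: tup3_def numeral_3_eq_3 numeral_2_eq_2 less_Suc_eq)

lemma ce_d1: assumes a: "alt_form 1 \<alpha>" shows "ce_d br 1 \<alpha> x = - \<alpha> (tup1 (br (x 0) (x 1)))"
  unfolding ce_d_def sum_atMost_expand
  by (simp add: alt1_arg[OF a])

lemma ce_d2: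
  assumes a: "alt_form 2 \<alpha>"
  shows "ce_d br 2 \<alpha> x = - \<alpha> (tup2 (br (x 0) (x 1)) (x 2))
   + \<alpha> (tup2 (br (x 0) (x 2)) (x 1)) - \<alpha> (tup2 (br (x 1) (x 2)) (x 0))"
  unfolding ce_d_def sum_atMost_expand
  by (simp add: alt2_arg[OF a] skip2_def numeral_2_eq_2)

lemma ce_d3:
  assumes a: "alt_form 3 \<alpha>"
  shows "ce_d br 3 \<alpha> x = - \<alpha> (tup3 (br (x 0) (x 1)) (x 2) (x 3))
   + \<alpha> (tup3 (br (x 0) (x 2)) (x 1) (x 3)) - \<alpha> (tup3 (br (x 0) (x 3)) (x 1) (x 2))
   - \<alpha> (tup3 (br (x 1) (x 2)) (x 0) (x 3)) + \<alpha> (tup3 (br (x 1) (x 3)) (x 0) (x 2))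
   - \<alpha> (tup3 (br (x 2) (x 3)) (x 0) (x 1))"
  unfolding ce_d_def sum_atMost_expand
  by (simp add: alt3_arg[OF a] skip2_def numeral_2_eq_2 numeral_3_eq_3)

lemma coframe_linear: "coframe7 f \<Longrightarrow> i \<in> {1..7} \<Longrightarrow> linear (f i)"
  unfolding coframe7_def by blast

lemma linear_functional_inner:
  fixes l :: "'a::euclidean_space \<Rightarrow> real"
  assumes "linear l"
  shows "l w = (\<Sum>b\<in>Basis. l b *\<^sub>R b) \<bullet> w"
proof -
  have "l w = l (\<Sum>b\<in>Basis. (w \<bullet> b) *\<^sub>R b)" by (simp add: euclidean_representation)
  also have "\<dots> = (\<Sum>b\<in>Basis. (w \<bullet> b) * l b)" using assms by (simp add: linear_sum linear_scale)
  also have "\<dots> = (\<Sum>b\<in>Basis. l b *\<^sub>R b) \<bullet> w"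
    unfolding inner_sum_left by (simp add: inner_commute mult.commute)
  finally show ?thesis .
qed

lemma independent_family_spans:
  fixes a :: "'i \<Rightarrow> 'a::euclidean_space"
  assumes fin: "finite I" and card: "card I = DIM('a)"
    and indep: "\<And>c. (\<Sum>i\<in>I. c i *\<^sub>R a i) = 0 \<Longrightarrow> \<forall>i\<in>I. c i = 0"
  shows "span (a ` I) = UNIV"
proof -
  have inj: "inj_on a I"
  proof (rule inj_onI, rule ccontr)
    fix i j assume i: "i \<in> I" and j: "j \<in> I" and eq: "a i = a j" and ne: "i \<noteq> j"
    define c where "c k = (if k = i then 1 else if k = j then -1 else (0::real))" for k
    have "(\<Sum>k\<in>I. c k *\<^sub>R a k) = (\<Sum>k\<in>I. (if k = i then a k else 0) - (if k = j then a k else 0))"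
      by (rule sum.cong) (auto simp: c_def ne)
    also have "\<dots> = 0" using fin i j eq by (simp add: sum_subtractf)
    finally have "c i = 0" using indep i by blast
    then show False by (simp add: c_def)
  qed
  have "independent (a ` I)"
  proof (rule independent_if_scalars_zero)
    show "finite (a ` I)" using fin by simp
    fix u x assume "(\<Sum>y\<in>a ` I. u y *\<^sub>R y) = 0" and x: "x \<in> a ` I"
    then have "(\<Sum>i\<in>I. u (a i) *\<^sub>R a i) = 0" by (simp add: sum.reindex[OF inj])
    then show "u x = 0" using indep[of "\<lambda>i. u (a i)"] x by auto
  qed
  moreover have "card (a ` I) = DIM('a)" using card_image[OF inj] card by simp
  ultimately have "UNIV \<subseteq> span (a ` I)" by (intro card_ge_dim_independent) auto
  then show ?thesis by auto
qed

(* The seven coframe functionals form a basis of the dual space, hence separate points: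
   their representing vectors span the space and are all orthogonal to v. *)
lemma coframe_separates:
  fixes f :: "nat \<Rightarrow> 'g::euclidean_space \<Rightarrow> real"
  assumes dim: "DIM('g) = 7" and cf: "coframe7 f" and z: "\<forall>i\<in>{1..7}. f i v = 0"
  shows "v = 0"
proof -
  define a where "a i = (\<Sum>b\<in>Basis. f i b *\<^sub>R b)" for i
  have fa: "f i w = a i \<bullet> w" if "i \<in> {1..7}" for i w
    unfolding a_def using linear_functional_inner[OF coframe_linear[OF cf that]] .
  have "span (a ` {1..7}) = UNIV"
  proof (rule independent_family_spans)
    fix c assume combination: "(\<Sum>i\<in>{1..7}. c i *\<^sub>R a i) = 0"
    have "(\<Sum>i=1..7. c i * f i w) = (\<Sum>i\<in>{1..7}. c i *\<^sub>R a i) \<bullet> w" for w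
      by (simp add: fa inner_sum_left)
    then have "(\<Sum>i=1..7. c i * f i w) = 0" for w using combination by simp
    then show "\<forall>i\<in>{1..7}. c i = 0" using cf unfolding coframe7_def by blast
  qed (use dim in auto)
  then have "orthogonal v v"
    by (intro orthogonal_to_span[of v "a ` {1..7}"]) (use fa z in \<open>auto simp: orthogonal_def inner_commute\<close>)
  then show "v = 0" by (simp add: orthogonal_def)
qed

lemma coframe_inner_linear: assumes cf: "coframe7 f" shows "linear (coframe_inner f u)"
proof -
  have "\<forall>i\<in>{1..7}. linear (\<lambda>v. f i u *\<^sub>R f i v)"
    using coframe_linear[OF cf] linear_compose_scale_right by blast
  then show ?thesis unfolding coframe_inner_def using linear_compose_sum by force
qed

lemma coframe_inner_pos:
  fixes f :: "nat \<Rightarrow> 'g::euclidean_space \<Rightarrow> real"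
  assumes dim: "DIM('g) = 7" and cf: "coframe7 f" and v: "v \<noteq> 0"
  shows "coframe_inner f v v > 0"
proof -
  have eq: "coframe_inner f v v = (\<Sum>i=1..7. (f i v)\<^sup>2)"
    unfolding coframe_inner_def power2_eq_square ..
  have "coframe_inner f v v \<noteq> 0"
  proof
    assume "coframe_inner f v v = 0"
    then have "\<forall>i\<in>{1..7}. f i v = 0" unfolding eq by (subst (asm) sum_nonneg_eq_0_iff) auto
    then show False using coframe_separates[OF dim cf] v by blast
  qed
  moreover have "coframe_inner f v v \<ge> 0" unfolding eq by (simp add: sum_nonneg)
  ultimately show ?thesis by simp
qed

(* The vector-valued bilinear map with phi(u, v, w) = sum_j g2_cross(f u, f w)_j f_j(v):
   up to sign, the cross product of R^7 in coordinates of the coframe. *)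
definition g2_cross :: "(nat \<Rightarrow> real) \<Rightarrow> (nat \<Rightarrow> real) \<Rightarrow> nat \<Rightarrow> real" where
  "g2_cross X Z j = (
    if j = 1 then (- X 2 * Z 7 - X 3 * Z 5 + X 4 * Z 6 + X 5 * Z 3 - X 6 * Z 4 + X 7 * Z 2)
    else if j = 2 then (X 1 * Z 7 + X 3 * Z 6 + X 4 * Z 5 - X 5 * Z 4 - X 6 * Z 3 - X 7 * Z 1)
    else if j = 3 then (X 1 * Z 5 - X 2 * Z 6 - X 4 * Z 7 - X 5 * Z 1 + X 6 * Z 2 + X 7 * Z 4)
    else if j = 4 then (- X 1 * Z 6 - X 2 * Z 5 + X 3 * Z 7 + X 5 * Z 2 + X 6 * Z 1 - X 7 * Z 3)
    else if j = 5 then (- X 1 * Z 3 + X 2 * Z 4 + X 3 * Z 1 - X 4 * Z 2 - X 6 * Z 7 + X 7 * Z 6)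
    else if j = 6 then (X 1 * Z 4 + X 2 * Z 3 - X 3 * Z 2 - X 4 * Z 1 + X 5 * Z 7 - X 7 * Z 5)
    else if j = 7 then (- X 1 * Z 2 + X 2 * Z 1 - X 3 * Z 4 + X 4 * Z 3 - X 5 * Z 6 + X 6 * Z 5)
    else 0)"

lemma sum_1_7: "sum h {1..7::nat} = h 1 + h 2 + h 3 + h 4 + h 5 + h 6 + h 7"
proof -
  have "{1..7::nat} = {1,2,3,4,5,6,7}" by auto
  then show ?thesis by (simp add: add.assoc)
qed

lemma phi_std_eval:
  "phi_std f (tup3 u v w) = (\<Sum>j\<in>{1..7}. g2_cross (\<lambda>i. f i u) (\<lambda>i. f i w) j * f j v)"
proof -
  have f3_eval: "f3 f a b c x = (f a (x 0) * f b (x 1) - f a (x 1) * f b (x 0)) * f c (x 2)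
     - (f a (x 0) * f b (x 2) - f a (x 2) * f b (x 0)) * f c (x 1)
     + (f a (x 1) * f b (x 2) - f a (x 2) * f b (x 1)) * f c (x 0)" for a b c x
    unfolding f3_def
    by (subst wedge21) (simp_all only: wedge11, simp_all add: one_form_def tup2_def tup1_def)
  show ?thesis
    unfolding phi_std_def f3_eval sum_1_7 g2_cross_def tup3_def by (simp add: algebra_simps)
qed

lemma g2_cross_lagrange:
  "(\<Sum>i\<in>{1..7}. \<Sum>j\<in>{1..7}. (X i * Z j - X j * Z i)\<^sup>2) = 2 * (\<Sum>j\<in>{1..7}. (g2_cross X Z j)\<^sup>2)"
  unfolding sum_1_7 g2_cross_def by (simp add: power2_eq_square algebra_simps)

(* Nondegeneracy of the G2 form: phi(x, -, z) = 0 with z nonzero forces x parallel to z,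
   since then X x Z = 0 and by the Lagrange identity X and Z are proportional. *)
lemma phi_std_nondegenerate:
  fixes f :: "nat \<Rightarrow> 'g::euclidean_space \<Rightarrow> real"
  assumes dim: "DIM('g) = 7" and cf: "coframe7 f" and z: "z \<noteq> 0"
    and degenerate: "\<And>v. phi_std f (tup3 x v z) = 0"
  shows "\<exists>t. x = t *\<^sub>R z"
proof -
  define X where "X = (\<lambda>i. f i x)"
  define Z where "Z = (\<lambda>i. f i z)"
  have "\<forall>v. (\<Sum>j=1..7. g2_cross X Z j * f j v) = 0"
    using degenerate unfolding phi_std_eval X_def Z_def by simp
  then have "\<forall>j\<in>{1..7}. g2_cross X Z j = 0" using cf unfolding coframe7_def by blast
  then have "(\<Sum>i\<in>{1..7}. \<Sum>j\<in>{1..7}. (X i * Z j - X j * Z i)\<^sup>2) = 0"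
    unfolding g2_cross_lagrange by simp
  then have proportional: "X i * Z j = X j * Z i" if "i \<in> {1..7}" "j \<in> {1..7}" for i j
    using that by (simp add: sum_nonneg_eq_0_iff sum_nonneg)
  obtain k where k: "k \<in> {1..7}" "Z k \<noteq> 0"
    using coframe_separates[OF dim cf] z unfolding Z_def by blast
  define t where "t = X k / Z k"
  have "\<forall>i\<in>{1..7}. f i (x - t *\<^sub>R z) = 0"
  proof
    fix i :: nat assume i: "i \<in> {1..7}"
    have "f i (x - t *\<^sub>R z) = X i - t * Z i"
      using coframe_linear[OF cf i] unfolding X_def Z_def by (simp add: linear_diff linear_scale)
    also have "\<dots> = (X i * Z k - X k * Z i) / Z k" unfolding t_def using k(2) by (simp add: field_simps)
    finally show "f i (x - t *\<^sub>R z) = 0" using proportional[OF i k(1)] by simp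
  qed
  then have "x - t *\<^sub>R z = 0" by (rule coframe_separates[OF dim cf])
  then show ?thesis by auto
qed

lemma lie_antisym: assumes "lie_algebra br" shows "br a b = - br b a"
proof -
  have bl: "bilinear br" and z: "\<And>x. br x x = 0" using assms unfolding lie_algebra_def by auto
  have "br (a + b) (a + b) = br a a + br a b + (br b a + br b b)"
    by (simp add: bilinear_ladd[OF bl] bilinear_radd[OF bl])
  then have "br a b + br b a = 0" using z[of a] z[of b] z[of "a+b"] by simp
  then show ?thesis by (simp add: eq_neg_iff_add_eq_0)
qed

locale central_line_quotient =
  fixes brg :: "'g::real_vector \<Rightarrow> 'g \<Rightarrow> 'g" and brh :: "'h::real_vector \<Rightarrow> 'h \<Rightarrow> 'h"
    and \<pi> :: "'g \<Rightarrow> 'h" and \<xi> :: 'g and \<theta> :: "'g \<Rightarrow> real"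
  assumes lie_g: "lie_algebra brg"
    and pi_lin: "linear \<pi>" and pi_surj: "surj \<pi>"
    and pi_hom: "\<And>x y. \<pi> (brg x y) = brh (\<pi> x) (\<pi> y)"
    and ker_pi: "{x. \<pi> x = 0} = range (\<lambda>t::real. t *\<^sub>R \<xi>)"
    and xi_central: "\<And>y. brg \<xi> y = 0"
    and theta_lin: "linear \<theta>" and theta_xi: "\<theta> \<xi> \<noteq> 0"
begin

lemma pi_xi: "\<pi> \<xi> = 0"
  using ker_pi by (metis (mono_tags, lifting) mem_Collect_eq rangeI scaleR_one)

lemma xi_central_right: "brg y \<xi> = 0"
  using lie_antisym[OF lie_g, of y \<xi>] xi_central by simp

lemma horizontal_lift: "\<exists>x. \<pi> x = w \<and> \<theta> x = 0"
proof -
  obtain x' where x': "\<pi> x' = w" using pi_surj by (metis surjD)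
  define x where "x = x' - (\<theta> x' / \<theta> \<xi>) *\<^sub>R \<xi>"
  have "\<pi> x = w" unfolding x_def using pi_lin by (simp add: linear_diff linear_scale pi_xi x')
  moreover have "\<theta> x = 0" unfolding x_def using theta_lin theta_xi by (simp add: linear_diff linear_scale)
  ultimately show ?thesis by blast
qed

lemma lifted_form_eval:
  assumes \<omega>: "alt_form 2 \<omega>" and \<psi>: "alt_form 3 \<psi>"
  shows "wedge 2 1 (pullback \<pi> \<omega>) (one_form \<theta>) x + pullback \<pi> \<psi> x
    = \<omega> (tup2 (\<pi> (x 0)) (\<pi> (x 1))) * \<theta> (x 2) - \<omega> (tup2 (\<pi> (x 0)) (\<pi> (x 2))) * \<theta> (x 1)
      + \<omega> (tup2 (\<pi> (x 1)) (\<pi> (x 2))) * \<theta> (x 0) + \<psi> (tup3 (\<pi> (x 0)) (\<pi> (x 1)) (\<pi> (x 2)))"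
proof -
  have "wedge 2 1 (pullback \<pi> \<omega>) (one_form \<theta>) x
      = pullback \<pi> \<omega> (tup2 (x 0) (x 1)) * one_form \<theta> (tup1 (x 2))
      - pullback \<pi> \<omega> (tup2 (x 0) (x 2)) * one_form \<theta> (tup1 (x 1))
      + pullback \<pi> \<omega> (tup2 (x 1) (x 2)) * one_form \<theta> (tup1 (x 0))"
  proof (rule wedge21)
    show "pullback \<pi> \<omega> y = pullback \<pi> \<omega> (tup2 (y 0) (y 1))" for y
      unfolding pullback2[OF \<omega>] by (simp add: tup_simps)
    show "pullback \<pi> \<omega> (tup2 b a) = - pullback \<pi> \<omega> (tup2 a b)" for a b
      unfolding pullback2[OF \<omega>] tup_simps by (rule alt2_swap[OF \<omega>])
    show "one_form \<theta> y = one_form \<theta> (tup1 (y 0))" for y by (simp add: one_form_def tup_simps)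
  qed
  then show ?thesis
    unfolding pullback2[OF \<omega>] pullback3[OF \<psi>] by (simp add: one_form_def tup_simps)
qed

lemma curvature_eval:
  assumes \<gamma>: "alt_form 2 \<gamma>" and curv: "ce_d brg 1 (one_form \<theta>) = pullback \<pi> \<gamma>"
  shows "\<theta> (brg a b) = - \<gamma> (tup2 (\<pi> a) (\<pi> b))"
proof -
  have \<eta>: "alt_form 1 (one_form \<theta>)" unfolding alt_form_def one_form_def using theta_lin by auto
  have "ce_d brg 1 (one_form \<theta>) (tup2 a b) = pullback \<pi> \<gamma> (tup2 a b)" using curv by simp
  then show ?thesis unfolding ce_d1[OF \<eta>] pullback2[OF \<gamma>] by (simp add: one_form_def tup_simps)
qed

(* Closedness of phi evaluated on (x0, x1, x2, xi): only the terms containing eta(xi) survive,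
   and they add up to theta(xi) * d(omega). *)
lemma reduced_form_closed:
  assumes \<omega>: "alt_form 2 \<omega>" and \<psi>: "alt_form 3 \<psi>" and \<phi>: "alt_form 3 \<phi>"
    and decomp: "\<phi> = (\<lambda>x. wedge 2 1 (pullback \<pi> \<omega>) (one_form \<theta>) x + pullback \<pi> \<psi> x)"
    and closed: "ce_d brg 3 \<phi> = (\<lambda>x. 0)"
  shows "ce_d brh 2 \<omega> = (\<lambda>x. 0)"
proof
  fix y :: "nat \<Rightarrow> 'h"
  obtain x0 x1 x2 where x: "\<pi> x0 = y 0" "\<pi> x1 = y 1" "\<pi> x2 = y 2" using pi_surj by (metis surjD)
  have "ce_d brg 3 \<phi> (tup4 x0 x1 x2 \<xi>) = 0" using closed by simp
  then have "\<theta> \<xi> * ce_d brh 2 \<omega> y = 0"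
    unfolding ce_d3[OF \<phi>] ce_d2[OF \<omega>] unfolding decomp lifted_form_eval[OF \<omega> \<psi>]
    using linear_0[OF pi_lin] linear_0[OF theta_lin]
    by (simp add: tup_simps pi_hom pi_xi xi_central xi_central_right alt2_zero[OF \<omega>] alt3_zero[OF \<psi>]
        x algebra_simps)
  then show "ce_d brh 2 \<omega> y = 0" using theta_xi by simp
qed

(* phi(x, v, xi) = theta(xi) omega(pi x, pi v); so omega inherits nondegeneracy from phi. *)
lemma reduced_form_nondegenerate:
  assumes \<omega>: "alt_form 2 \<omega>" and \<psi>: "alt_form 3 \<psi>"
    and decomp: "\<phi> = (\<lambda>x. wedge 2 1 (pullback \<pi> \<omega>) (one_form \<theta>) x + pullback \<pi> \<psi> x)"
    and phi_nondeg: "\<And>x. (\<And>v. \<phi> (tup3 x v \<xi>) = 0) \<Longrightarrow> \<pi> x = 0"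
    and u: "\<And>v. \<omega> (tup2 u v) = 0"
  shows "u = 0"
proof -
  obtain x where x: "\<pi> x = u" using pi_surj by (metis surjD)
  have "\<phi> (tup3 x v \<xi>) = \<theta> \<xi> * \<omega> (tup2 u (\<pi> v))" for v
    unfolding decomp lifted_form_eval[OF \<omega> \<psi>]
    by (simp add: tup_simps x pi_xi alt2_zero[OF \<omega>] alt3_zero[OF \<psi>])
  then have "\<pi> x = 0" using phi_nondeg u by simp
  then show "u = 0" using x by simp
qed

(* Closedness of phi on four horizontal lifts: the terms with theta([x_i, x_j]) give
   gamma ^ omega, the others d(psi); so gamma ^ omega = d(-psi). *)
lemma curvature_wedge_exact:
  assumes \<omega>: "alt_form 2 \<omega>" and \<psi>: "alt_form 3 \<psi>" and \<phi>: "alt_form 3 \<phi>"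
    and \<gamma>: "alt_form 2 \<gamma>"
    and decomp: "\<phi> = (\<lambda>x. wedge 2 1 (pullback \<pi> \<omega>) (one_form \<theta>) x + pullback \<pi> \<psi> x)"
    and closed: "ce_d brg 3 \<phi> = (\<lambda>x. 0)"
    and curv: "ce_d brg 1 (one_form \<theta>) = pullback \<pi> \<gamma>"
  shows "wedge 2 2 \<gamma> \<omega> = ce_d brh 3 (\<lambda>x. - \<psi> x)"
proof
  fix y :: "nat \<Rightarrow> 'h"
  have comm: "\<omega> a * \<gamma> b = \<gamma> b * \<omega> a" for a b by (rule mult.commute)
  obtain x0 where x0: "\<pi> x0 = y 0" "\<theta> x0 = 0" using horizontal_lift by blast
  obtain x1 where x1: "\<pi> x1 = y 1" "\<theta> x1 = 0" using horizontal_lift by blast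
  obtain x2 where x2: "\<pi> x2 = y 2" "\<theta> x2 = 0" using horizontal_lift by blast
  obtain x3 where x3: "\<pi> x3 = y 3" "\<theta> x3 = 0" using horizontal_lift by blast
  have "wedge 2 2 \<gamma> \<omega> y - ce_d brh 3 (\<lambda>x. - \<psi> x) y = ce_d brg 3 \<phi> (tup4 x0 x1 x2 x3)"
    unfolding ce_d3[OF \<phi>] ce_d3[OF alt_form_neg[OF \<psi>]] unfolding decomp lifted_form_eval[OF \<omega> \<psi>]
      wedge22[where A=\<gamma> and B=\<omega>, OF alt2_norm[OF \<gamma>] alt2_swap[OF \<gamma>] alt2_norm[OF \<omega>]
        alt2_swap[OF \<omega>]]
    by (simp only: tup_simps pi_hom curvature_eval[OF \<gamma> curv] x0 x1 x2 x3 mult_zero_left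
        mult_zero_right mult_minus_left mult_minus_right add_0_left add_0_right diff_0
        diff_0_right comm)
  then show "wedge 2 2 \<gamma> \<omega> y = ce_d brh 3 (\<lambda>x. - \<psi> x) y" using closed by simp
qed

(* A functional kappa with kappa(xi) nonzero that vanishes on all brackets splits g:
   (pi, kappa) is a Lie algebra isomorphism g -> h (+) R. *)
lemma split_by_flat_functional:
  fixes \<kappa> :: "'g \<Rightarrow> real"
  assumes \<kappa>_lin: "linear \<kappa>" and \<kappa>_xi: "\<kappa> \<xi> \<noteq> 0" and flat: "\<And>x y. \<kappa> (brg x y) = 0"
  shows "\<exists>\<Phi> :: 'g \<Rightarrow> 'h \<times> real. linear \<Phi> \<and> bij \<Phi> \<and>
           (\<forall>x y. \<Phi> (brg x y) = sum_R_bracket brh (\<Phi> x) (\<Phi> y))"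
proof -
  define \<Phi> where "\<Phi> v = (\<pi> v, \<kappa> v)" for v
  have lin: "linear \<Phi>"
    unfolding \<Phi>_def using pi_lin \<kappa>_lin by (simp add: linear_iff)
  have "inj \<Phi>"
    unfolding linear_injective_0[OF lin]
  proof (intro allI impI)
    fix v assume "\<Phi> v = 0"
    then have "\<pi> v = 0" and \<kappa>v: "\<kappa> v = 0" by (simp_all add: \<Phi>_def zero_prod_def)
    then obtain t where t: "v = t *\<^sub>R \<xi>" using ker_pi by blast
    then have "t * \<kappa> \<xi> = 0" using \<kappa>v linear_scale[OF \<kappa>_lin] by simp
    then show "v = 0" using t \<kappa>_xi by simp
  qed
  moreover have "p \<in> range \<Phi>" for p :: "'h \<times> real"
  proof -
    obtain x where x: "\<pi> x = fst p" using pi_surj by (metis surjD)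
    have "\<Phi> (x + ((snd p - \<kappa> x) / \<kappa> \<xi>) *\<^sub>R \<xi>) = p"
      unfolding \<Phi>_def using \<kappa>_xi pi_lin \<kappa>_lin
      by (simp add: linear_add linear_scale pi_xi x)
    then show ?thesis by (metis rangeI)
  qed
  ultimately have "bij \<Phi>" unfolding bij_def by blast
  moreover have "\<forall>x y. \<Phi> (brg x y) = sum_R_bracket brh (\<Phi> x) (\<Phi> y)"
    by (simp add: \<Phi>_def sum_R_bracket_def pi_hom flat)
  ultimately show ?thesis using lin by blast
qed

(* If the curvature is exact, gamma = d(beta), then theta - pi^* beta is flat and splits g. *)
lemma split_if_curvature_exact:
  assumes \<gamma>: "alt_form 2 \<gamma>" and curv: "ce_d brg 1 (one_form \<theta>) = pullback \<pi> \<gamma>"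
    and \<beta>: "alt_form 1 \<beta>" and exact: "\<gamma> = ce_d brh 1 \<beta>"
  shows "\<exists>\<Phi> :: 'g \<Rightarrow> 'h \<times> real. linear \<Phi> \<and> bij \<Phi> \<and>
           (\<forall>x y. \<Phi> (brg x y) = sum_R_bracket brh (\<Phi> x) (\<Phi> y))"
proof (rule split_by_flat_functional)
  define b where "b w = \<beta> (tup1 w)" for w
  have b_lin: "linear b" unfolding b_def by (rule alt1_linear[OF \<beta>])
  show "linear (\<lambda>v. \<theta> v - b (\<pi> v))"
    using theta_lin linear_compose[OF pi_lin b_lin] by (simp add: linear_compose_sub comp_def)
  show "\<theta> \<xi> - b (\<pi> \<xi>) \<noteq> 0" using theta_xi linear_0[OF b_lin] by (simp add: pi_xi)
  show "\<theta> (brg x y) - b (\<pi> (brg x y)) = 0" for x y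
    unfolding curvature_eval[OF \<gamma> curv] exact ce_d1[OF \<beta>] b_def by (simp add: tup_simps pi_hom)
qed

end

theorem proposition2p1:
  fixes brg :: "'g::euclidean_space \<Rightarrow> 'g \<Rightarrow> 'g"
    and brh :: "'h::euclidean_space \<Rightarrow> 'h \<Rightarrow> 'h"
    and \<phi> :: "(nat \<Rightarrow> 'g) \<Rightarrow> real"
    and f :: "nat \<Rightarrow> 'g \<Rightarrow> real"
    and \<pi> :: "'g \<Rightarrow> 'h"
    and \<xi> :: 'g
    and \<eta> :: "(nat \<Rightarrow> 'g) \<Rightarrow> real"
    and \<omega> \<gamma> :: "(nat \<Rightarrow> 'h) \<Rightarrow> real"
    and \<psi> :: "(nat \<Rightarrow> 'h) \<Rightarrow> real"
  assumes g_lie: "lie_algebra brg" and g_dim: "DIM('g) = 7"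
    and h_lie: "lie_algebra brh" and h_dim: "DIM('h) = 6"
    and center: "\<exists>z. z \<noteq> 0 \<and> (\<forall>y. brg z y = 0)"
    and phi_form: "alt_form 3 \<phi>"
    and G2: "G2_coframe \<phi> f"
    and calibrated: "ce_d brg 3 \<phi> = (\<lambda>x. 0)"
    and pi_lin: "linear \<pi>" and pi_surj: "surj \<pi>"
    and pi_hom: "\<forall>x y. \<pi> (brg x y) = brh (\<pi> x) (\<pi> y)"
    and ker_central: "\<forall>x. \<pi> x = 0 \<longrightarrow> (\<forall>y. brg x y = 0)"
    and xi_span: "\<xi> \<noteq> 0" "{x. \<pi> x = 0} = range (\<lambda>t::real. t *\<^sub>R \<xi>)"
    and eta_def: "\<eta> = one_form (coframe_inner f \<xi>)"
    and omega_form: "alt_form 2 \<omega>" and psi_form: "alt_form 3 \<psi>"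
    and decomp: "\<phi> = (\<lambda>x. wedge 2 1 (pullback \<pi> \<omega>) \<eta> x + pullback \<pi> \<psi> x)"
    and gamma_form: "alt_form 2 \<gamma>"
    and curvature: "ce_d brg 1 \<eta> = pullback \<pi> \<gamma>"
  shows "ce_d brh 2 \<omega> = (\<lambda>x. 0)
    \<and> (\<forall>u. (\<forall>v. \<omega> (\<lambda>i. if i = 0 then u else v) = 0) \<longrightarrow> u = 0)
    \<and> (\<exists>\<rho>. alt_form 3 \<rho> \<and> wedge 2 2 \<gamma> \<omega> = ce_d brh 3 \<rho>)
    \<and> ((\<exists>\<beta>. alt_form 1 \<beta> \<and> \<gamma> = ce_d brh 1 \<beta>) \<longrightarrow>
        (\<exists>\<Phi> :: 'g \<Rightarrow> 'h \<times> real. linear \<Phi> \<and> bij \<Phi> \<and>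
           (\<forall>x y. \<Phi> (brg x y) = sum_R_bracket brh (\<Phi> x) (\<Phi> y))))"
proof -
  have cf: "coframe7 f" and phi_std: "\<phi> = phi_std f" using G2 unfolding G2_coframe_def by auto
  define \<theta> where "\<theta> = coframe_inner f \<xi>"
  have pi_xi: "\<pi> \<xi> = 0" using xi_span(2) by (metis (mono_tags) mem_Collect_eq rangeI scaleR_one)
  have theta_lin: "linear \<theta>" unfolding \<theta>_def by (rule coframe_inner_linear[OF cf])
  have theta_xi: "\<theta> \<xi> \<noteq> 0"
    using coframe_inner_pos[OF g_dim cf xi_span(1)] unfolding \<theta>_def by simp
  have pi_hom': "\<And>x y. \<pi> (brg x y) = brh (\<pi> x) (\<pi> y)" using pi_hom by blast
  have xi_central: "\<And>y. brg \<xi> y = 0" using ker_central pi_xi by blast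
  interpret red: central_line_quotient brg brh \<pi> \<xi> \<theta>
    by (rule central_line_quotient.intro[OF g_lie pi_lin pi_surj pi_hom' xi_span(2) xi_central
          theta_lin theta_xi])
  have decomp': "\<phi> = (\<lambda>x. wedge 2 1 (pullback \<pi> \<omega>) (one_form \<theta>) x + pullback \<pi> \<psi> x)"
    using decomp eta_def unfolding \<theta>_def by simp
  have curvature': "ce_d brg 1 (one_form \<theta>) = pullback \<pi> \<gamma>"
    using curvature eta_def unfolding \<theta>_def by simp
  have phi_nondeg: "\<pi> x = 0" if degenerate: "\<And>v. \<phi> (tup3 x v \<xi>) = 0" for x
  proof -
    obtain t where "x = t *\<^sub>R \<xi>"
      using phi_std_nondegenerate[OF g_dim cf xi_span(1)] degenerate unfolding phi_std by blast
    then show ?thesis using linear_scale[OF pi_lin] pi_xi by simp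
  qed
  have "\<forall>u. (\<forall>v. \<omega> (\<lambda>i. if i = 0 then u else v) = 0) \<longrightarrow> u = 0"
    using red.reduced_form_nondegenerate[OF omega_form psi_form decomp' phi_nondeg]
    unfolding tup2_def by blast
  moreover have "\<exists>\<rho>. alt_form 3 \<rho> \<and> wedge 2 2 \<gamma> \<omega> = ce_d brh 3 \<rho>"
    using alt_form_neg[OF psi_form] red.curvature_wedge_exact[OF omega_form psi_form phi_form
        gamma_form decomp' calibrated curvature'] by blast
  ultimately show ?thesis
    using red.reduced_form_closed[OF omega_form psi_form phi_form decomp' calibrated]
      red.split_if_curvature_exact[OF gamma_form curvature'] by blast
qed

end
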